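(* Let $\varepsilon>0$, $m\in\mathbb{N}$ and $K,T>0$ with $T\ge K$. Let $A,B\in\mathbb{Z}$ with $A\neq 0$. Then \[ \sum_{\substack{ |k| \leq K \\ (Ak+B, m ) \leq T }} (Ak+B,m) \ll_\varepsilon m^\varepsilon (A,m)\, T, \] where $k$ ranges over integers.
   Context: $(u,v)$ denotes the greatest common divisor. *)

theory Defs
  imports Complex_Main
begin

end

theory Submission
  imports Defs "HOL-Computational_Algebra.Primes"
begin

(*
  Group the k according to d = (Ak + B, m), a divisor of m with d \<le> T. The k with d | Ak + B
  form one residue class modulo d / (A, d), so at most 2K (A, d) / d + 1 of them satisfy |k| \<le> K,
  and the fibre of d contributes at most 2K (A, d) + d \<le> 3 (A, m) T. There are at most \<tau>(m)
  values of d, and \<tau>(m) \<le> C m^\<epsilon> because each prime power p^a exactly dividing m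
  contributes a factor a + 1 \<le> c p^(a \<epsilon>), where c = 1 as soon as p \<ge> 2^(1/\<epsilon>).
*)

definition divisor_count :: "nat \<Rightarrow> nat" where
  "divisor_count n = card {d. d dvd n}"

lemma divisor_count_prime_power_mult_le:
  fixes p m a :: nat
  assumes p: "prime p" and "\<not> p dvd m" and "m > 0"
  shows "divisor_count (p ^ a * m) \<le> (a + 1) * divisor_count m"
proof -
  have "{d. d dvd p ^ a * m} \<subseteq> (\<lambda>(i, e). p ^ i * e) ` ({..a} \<times> {e. e dvd m})"
  proof
    fix d assume "d \<in> {d. d dvd p ^ a * m}"
    then have d: "d dvd p ^ a * m" by simp
    moreover have "p ^ a * m \<noteq> 0"
      using assms by (simp add: prime_gt_0_nat)
    ultimately have "d \<noteq> 0"
      by (metis dvd_0_left_iff)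
    then obtain e where de: "d = p ^ multiplicity p d * e" and "\<not> p dvd e"
      using multiplicity_decompose'[of d p] p not_prime_unit by blast
    then have "coprime e (p ^ a)"
      using prime_imp_coprime[OF p] by (simp add: coprime_commute)
    moreover have "e dvd p ^ a * m"
      using d de by (metis dvd_mult_right)
    ultimately have "e dvd m"
      by (simp add: coprime_dvd_mult_right_iff)
    have "multiplicity p d \<le> multiplicity p (p ^ a * m)"
      using d assms by (intro dvd_imp_multiplicity_le) auto
    also have "\<dots> = a"
      using assms by (intro multiplicity_decomposeI) auto
    finally show "d \<in> (\<lambda>(i, e). p ^ i * e) ` ({..a} \<times> {e. e dvd m})"
      using de \<open>e dvd m\<close> by (auto intro!: image_eqI[where x = "(multiplicity p d, e)"])
  qed
  then have "card {d. d dvd p ^ a * m} \<le> card ((\<lambda>(i, e). p ^ i * e) ` ({..a} \<times> {e. e dvd m}))"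
    using \<open>m > 0\<close> by (intro card_mono) auto
  also have "\<dots> \<le> card ({..a} \<times> {e. e dvd m})"
    using \<open>m > 0\<close> by (intro card_image_le) auto
  finally show ?thesis
    by (simp add: divisor_count_def card_cartesian_product)
qed

lemma divisor_count_le_prod_powr:
  fixes f :: "nat \<Rightarrow> real" and \<epsilon> :: real
  assumes f: "\<And>p a. prime p \<Longrightarrow> a > 0 \<Longrightarrow> real a + 1 \<le> f p * real p powr (real a * \<epsilon>)"
  shows "n > 0 \<Longrightarrow> real (divisor_count n) \<le> (\<Prod>p\<in>prime_factors n. f p) * real n powr \<epsilon>"
proof (induction n rule: less_induct)
  case (less n)
  show ?case
  proof (cases "n = 1")
    case False
    then obtain p where "p \<in> prime_factors n"
      using less.prems by (metis prime_factor_nat in_prime_factors_iff neq0_conv)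
    then have "prime p" and "p dvd n" by auto
    define a where "a = multiplicity p n"
    define m where "m = n div p ^ a"
    have n: "n = p ^ a * m"
      by (simp add: m_def a_def multiplicity_dvd)
    have "\<not> p dvd m"
      unfolding m_def a_def
      using multiplicity_decompose less.prems \<open>prime p\<close> not_prime_unit by blast
    have "a > 0"
      using \<open>prime p\<close> \<open>p dvd n\<close> less.prems by (simp add: a_def prime_multiplicity_gt_zero_iff)
    have "p ^ a > 1"
      using \<open>a > 0\<close> \<open>prime p\<close> by (metis one_less_power prime_gt_1_nat)
    then have "m > 0" and "m < n"
      using n less.prems by auto
    have factors: "prime_factors n = insert p (prime_factors m)"
      using n \<open>m > 0\<close> \<open>a > 0\<close> \<open>prime p\<close>
      by (simp add: prime_factors_product prime_factorization_prime_power prime_gt_0_nat)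
    have "p \<notin> prime_factors m"
      using \<open>\<not> p dvd m\<close> by auto
    let ?P = "\<lambda>k. (\<Prod>q\<in>prime_factors k. f q) * real k powr \<epsilon>"
    have IH: "real (divisor_count m) \<le> ?P m"
      using less.IH[OF \<open>m < n\<close> \<open>m > 0\<close>] .
    have "real n powr \<epsilon> = real p powr (real a * \<epsilon>) * real m powr \<epsilon>"
      using \<open>prime p\<close>
      by (simp add: n powr_mult powr_realpow[symmetric] powr_powr prime_gt_0_nat)
    then have Pn: "?P n = f p * real p powr (real a * \<epsilon>) * ?P m"
      using factors \<open>p \<notin> prime_factors m\<close> by (simp add: mult_ac)
    have "divisor_count n \<le> (a + 1) * divisor_count m"
      unfolding n by (rule divisor_count_prime_power_mult_le[OF \<open>prime p\<close> \<open>\<not> p dvd m\<close> \<open>m > 0\<close>])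
    then have "real (divisor_count n) \<le> (real a + 1) * real (divisor_count m)"
      by (metis of_nat_1 of_nat_add of_nat_le_iff of_nat_mult)
    also have "\<dots> \<le> (real a + 1) * ?P m"
      using IH by (intro mult_left_mono) auto
    also have "\<dots> \<le> f p * real p powr (real a * \<epsilon>) * ?P m"
      using f[OF \<open>prime p\<close> \<open>a > 0\<close>] IH of_nat_0_le_iff[of "divisor_count m"]
      by (intro mult_right_mono) linarith+
    also have "\<dots> = ?P n"
      by (rule Pn[symmetric])
    finally show ?thesis .
  qed (simp add: divisor_count_def)
qed

lemma Suc_le_const_mult_powr:
  fixes x \<epsilon> :: real
  assumes "x \<ge> 2" and "\<epsilon> > 0"
  shows "real a + 1 \<le> (1 + 1 / (\<epsilon> * ln 2)) * x powr (real a * \<epsilon>)"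
proof -
  define c where "c = 1 + 1 / (\<epsilon> * ln 2)"
  have "c \<ge> 1" and "c * (\<epsilon> * ln 2) = \<epsilon> * ln 2 + 1"
    using \<open>\<epsilon> > 0\<close> by (simp_all add: c_def field_simps)
  moreover have "real a * (\<epsilon> * ln 2) \<ge> 0"
    using \<open>\<epsilon> > 0\<close> by simp
  moreover have "c * (1 + real a * \<epsilon> * ln 2) = c + real a * (c * (\<epsilon> * ln 2))"
    by (simp add: algebra_simps)
  ultimately have "real a + 1 \<le> c * (1 + real a * \<epsilon> * ln 2)"
    by (simp add: algebra_simps)
  also have "1 + real a * \<epsilon> * ln 2 \<le> exp (real a * \<epsilon> * ln 2)"
    by (rule exp_ge_add_one_self)
  also have "\<dots> = 2 powr (real a * \<epsilon>)"
    by (simp add: powr_def)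
  also have "\<dots> \<le> x powr (real a * \<epsilon>)"
    using assms by (intro powr_mono2) auto
  finally show ?thesis
    using \<open>c \<ge> 1\<close> by (simp add: c_def mult_left_mono)
qed

lemma Suc_le_powr_of_large:
  fixes x \<epsilon> :: real
  assumes "x \<ge> 2 powr (1 / \<epsilon>)" and "\<epsilon> > 0"
  shows "real a + 1 \<le> x powr (real a * \<epsilon>)"
proof -
  have "x > 0"
    using assms(1) by (rule less_le_trans[rotated]) simp
  have "2 = (2 powr (1 / \<epsilon>)) powr \<epsilon>"
    using \<open>\<epsilon> > 0\<close> by (simp add: powr_powr)
  also have "\<dots> \<le> x powr \<epsilon>"
    using assms by (intro powr_mono2) auto
  finally have "2 ^ a \<le> (x powr \<epsilon>) ^ a"
    by (intro power_mono) auto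
  moreover have "real a + 1 \<le> 2 ^ a"
    by (induction a) auto
  ultimately show ?thesis
    using \<open>x > 0\<close> by (simp add: powr_realpow[symmetric] powr_powr mult.commute)
qed

lemma divisor_count_le_powr:
  fixes \<epsilon> :: real
  assumes "\<epsilon> > 0"
  shows "\<exists>C>0. \<forall>n>0. real (divisor_count n) \<le> C * real n powr \<epsilon>"
proof -
  define c where "c = 1 + 1 / (\<epsilon> * ln 2)"
  define x0 where "x0 = 2 powr (1 / \<epsilon>)"
  define f where "f p = (if real p < x0 then c else 1)" for p :: nat
  have "c \<ge> 1"
    using assms by (simp add: c_def)
  have factor_bound: "real a + 1 \<le> f p * real p powr (real a * \<epsilon>)" if "prime p" for p a
    using Suc_le_const_mult_powr[of "real p" \<epsilon> a] Suc_le_powr_of_large[of \<epsilon> "real p" a]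
      prime_ge_2_nat[OF that] assms by (simp add: f_def c_def x0_def)
  then have bound: "real (divisor_count n) \<le> (\<Prod>p\<in>prime_factors n. f p) * real n powr \<epsilon>"
    if "n > 0" for n
    using that by (intro divisor_count_le_prod_powr) (simp add: factor_bound)
  have prod_bound: "(\<Prod>p\<in>P. f p) \<le> c ^ nat \<lceil>x0\<rceil>" if "finite P" for P
  proof -
    have "{p \<in> P. real p < x0} \<subseteq> {..<nat \<lceil>x0\<rceil>}"
      by auto linarith
    then have "card {p \<in> P. real p < x0} \<le> nat \<lceil>x0\<rceil>"
      by (metis card_lessThan card_mono finite_lessThan)
    then have "c ^ card {p \<in> P. real p < x0} \<le> c ^ nat \<lceil>x0\<rceil>"
      using \<open>c \<ge> 1\<close> by (rule power_increasing)
    then show ?thesis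
      using that by (simp add: f_def prod.If_cases Int_def)
  qed
  show ?thesis
  proof (intro exI allI impI conjI)
    show "c ^ nat \<lceil>x0\<rceil> > 0"
      using \<open>c \<ge> 1\<close> by simp
    fix n :: nat
    assume "n > 0"
    then have "real (divisor_count n) \<le> (\<Prod>p\<in>prime_factors n. f p) * real n powr \<epsilon>"
      by (rule bound)
    also have "\<dots> \<le> c ^ nat \<lceil>x0\<rceil> * real n powr \<epsilon>"
      by (intro mult_right_mono prod_bound) auto
    finally show "real (divisor_count n) \<le> c ^ nat \<lceil>x0\<rceil> * real n powr \<epsilon>" .
  qed
qed

lemma card_pairwise_congruent_le:
  fixes X :: "int set" and q :: int and a b :: real
  assumes "q > 0" and "a \<le> b"
    and cong: "\<And>k l. k \<in> X \<Longrightarrow> l \<in> X \<Longrightarrow> q dvd k - l"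
    and bounds: "\<And>k. k \<in> X \<Longrightarrow> a \<le> k \<and> k \<le> b"
  shows "real (card X) \<le> (b - a) / q + 1"
proof (cases "X = {}")
  case False
  have "X \<subseteq> {\<lceil>a\<rceil>..\<lfloor>b\<rfloor>}"
    using bounds by (auto simp: ceiling_le_iff le_floor_iff)
  then have "finite X"
    using finite_subset by blast
  define k0 where "k0 = Min X"
  define N where "N = \<lfloor>(b - a) / q\<rfloor>"
  have "k0 \<in> X" and k0_le: "\<And>k. k \<in> X \<Longrightarrow> k0 \<le> k"
    using \<open>finite X\<close> False by (simp_all add: k0_def)
  have "X \<subseteq> (\<lambda>j. k0 + q * j) ` {0..N}"
  proof
    fix k
    assume "k \<in> X"
    define j where "j = (k - k0) div q"
    have k: "k = k0 + q * j"
      using cong[OF \<open>k \<in> X\<close> \<open>k0 \<in> X\<close>] by (simp add: j_def)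
    then have "j \<ge> 0"
      using k0_le[OF \<open>k \<in> X\<close>] \<open>q > 0\<close> by (simp add: zero_le_mult_iff)
    have "real_of_int q * j \<le> b - a"
      using k bounds[OF \<open>k \<in> X\<close>] bounds[OF \<open>k0 \<in> X\<close>] by simp
    then have "j \<le> N"
      using \<open>q > 0\<close> by (simp add: N_def le_floor_iff field_simps)
    with \<open>j \<ge> 0\<close> k show "k \<in> (\<lambda>j. k0 + q * j) ` {0..N}"
      by auto
  qed
  then have "card X \<le> card ((\<lambda>j. k0 + q * j) ` {0..N})"
    by (intro card_mono) auto
  also have "\<dots> \<le> card {0..N}"
    by (rule card_image_le) simp
  finally have "card X \<le> card {0..N}" .
  moreover have "N \<ge> 0"
    using assms by (simp add: N_def)
  ultimately show ?thesis
    by (simp add: N_def) linarith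
qed (use assms in simp)

lemma dvd_linear_imp_congruent:
  fixes A B d k l :: int
  assumes "d \<noteq> 0" and "d dvd A * k + B" and "d dvd A * l + B"
  shows "d div gcd A d dvd k - l"
proof -
  define g where "g = gcd A d"
  have "g \<noteq> 0"
    using \<open>d \<noteq> 0\<close> by (simp add: g_def)
  have A: "A = g * (A div g)" and d: "d = g * (d div g)"
    by (simp_all add: g_def)
  have "d dvd A * (k - l)"
    using dvd_diff[OF assms(2,3)] by (simp add: algebra_simps)
  then have "g * (d div g) dvd g * (A div g * (k - l))"
    by (subst (asm) A, subst (asm) d) (simp add: mult.assoc)
  then have "d div g dvd A div g * (k - l)"
    using \<open>g \<noteq> 0\<close> by simp
  moreover have "coprime (d div g) (A div g)"
    using \<open>d \<noteq> 0\<close> div_gcd_coprime[of d A] by (simp add: g_def gcd.commute)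
  ultimately show ?thesis
    by (simp add: g_def coprime_dvd_mult_right_iff)
qed

lemma card_linear_dvd_le:
  fixes A B d :: int and K :: real
  assumes "d > 0" and "K \<ge> 0"
  shows "real (card {k::int. \<bar>real_of_int k\<bar> \<le> K \<and> d dvd A * k + B})
           \<le> 2 * K * gcd A d / d + 1"
proof -
  have "d div gcd A d > 0"
    using assms by (simp add: pos_imp_zdiv_pos_iff zdvd_imp_le)
  have "real (card {k::int. \<bar>real_of_int k\<bar> \<le> K \<and> d dvd A * k + B}) \<le> (K - - K) / (d div gcd A d) + 1"
    using assms \<open>d div gcd A d > 0\<close> dvd_linear_imp_congruent[where A = A and B = B]
    by (intro card_pairwise_congruent_le) auto
  also have "\<dots> = 2 * K * gcd A d / d + 1"
    using \<open>d > 0\<close> by (simp add: real_of_int_div field_simps)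
  finally show ?thesis .
qed

lemma finite_int_abs_le: "finite {k::int. \<bar>real_of_int k\<bar> \<le> K}"
proof (rule finite_subset)
  show "{k::int. \<bar>real_of_int k\<bar> \<le> K} \<subseteq> {-\<lceil>K\<rceil>..\<lceil>K\<rceil>}"
    by (auto simp: abs_le_iff minus_le_iff le_ceiling_iff)
qed simp

lemma card_gcd_image_le_divisor_count:
  fixes f :: "'a \<Rightarrow> int" and m :: nat
  assumes "m > 0"
  shows "card ((\<lambda>x. gcd (f x) (int m)) ` S) \<le> divisor_count m"
proof -
  have "(\<lambda>x. gcd (f x) (int m)) ` S \<subseteq> int ` {d. d dvd m}"
  proof
    fix y
    assume "y \<in> (\<lambda>x. gcd (f x) (int m)) ` S"
    then have "y \<ge> 0" and "y dvd int m"
      by auto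
    then show "y \<in> int ` {d. d dvd m}"
      by (metis image_eqI mem_Collect_eq nonneg_eq_int int_dvd_int_iff)
  qed
  then have "card ((\<lambda>x. gcd (f x) (int m)) ` S) \<le> card (int ` {d. d dvd m})"
    using \<open>m > 0\<close> by (intro card_mono) auto
  also have "\<dots> \<le> divisor_count m"
    unfolding divisor_count_def by (rule card_image_le) (use \<open>m > 0\<close> in simp)
  finally show ?thesis .
qed

lemma gcd_linear_fibre_le:
  fixes A B d :: int and m :: nat and K T :: real
  assumes "d > 0" and "d dvd int m" and "d \<le> T" and "0 \<le> K" and "K \<le> T" and "m > 0"
  shows "d * real (card {k::int. \<bar>real_of_int k\<bar> \<le> K \<and> gcd (A * k + B) (int m) = d})
           \<le> 3 * real_of_int (gcd A (int m)) * T"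
proof -
  have gcd_le: "gcd A d \<le> gcd A (int m)"
    using assms by (intro zdvd_imp_le gcd_mono) auto
  have "gcd A (int m) \<ge> 1"
    using \<open>m > 0\<close> by (simp add: int_one_le_iff_zero_less)
  have "card {k::int. \<bar>real_of_int k\<bar> \<le> K \<and> gcd (A * k + B) (int m) = d}
          \<le> card {k::int. \<bar>real_of_int k\<bar> \<le> K \<and> d dvd A * k + B}"
    by (intro card_mono finite_subset[OF _ finite_int_abs_le]) auto
  then have "d * real (card {k::int. \<bar>real_of_int k\<bar> \<le> K \<and> gcd (A * k + B) (int m) = d})
          \<le> d * (2 * K * gcd A d / d + 1)"
    using card_linear_dvd_le[of d K A B] assms by (intro mult_left_mono) auto
  also have "\<dots> = 2 * K * gcd A d + d"
    using \<open>d > 0\<close> by (simp add: field_simps)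
  also have "\<dots> \<le> 2 * T * gcd A (int m) + T * gcd A (int m)"
  proof (rule add_mono)
    show "2 * K * gcd A d \<le> 2 * T * gcd A (int m)"
      using gcd_le assms by (intro mult_mono) simp_all
    have "T * 1 \<le> T * gcd A (int m)"
      using \<open>gcd A (int m) \<ge> 1\<close> assms by (intro mult_left_mono) simp_all
    then show "real_of_int d \<le> T * gcd A (int m)"
      using \<open>d \<le> T\<close> by simp
  qed
  finally show ?thesis
    by (simp add: mult_ac)
qed

lemma sum_gcd_linear_le:
  fixes A B :: int and m :: nat and K T :: real
  assumes "m > 0" and "0 \<le> K" and "K \<le> T"
  shows "(\<Sum>k\<in>{k::int. \<bar>real_of_int k\<bar> \<le> K \<and> real_of_int (gcd (A * k + B) (int m)) \<le> T}.
            real_of_int (gcd (A * k + B) (int m)))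
         \<le> 3 * real (divisor_count m) * real_of_int (gcd A (int m)) * T"
proof -
  define g where "g k = gcd (A * k + B) (int m)" for k
  define S where "S = {k::int. \<bar>real_of_int k\<bar> \<le> K \<and> real_of_int (g k) \<le> T}"
  have "finite S"
    unfolding S_def by (rule finite_subset[OF _ finite_int_abs_le]) auto
  have fibre: "real_of_int d * real (card {k \<in> S. g k = d}) \<le> 3 * real_of_int (gcd A (int m)) * T"
    if "d \<in> g ` S" for d
  proof -
    have "d > 0" "d dvd int m" "d \<le> T"
      using that \<open>m > 0\<close> by (auto simp: S_def g_def)
    moreover have "{k \<in> S. g k = d} = {k. \<bar>real_of_int k\<bar> \<le> K \<and> gcd (A * k + B) (int m) = d}"
      using \<open>d \<le> T\<close> by (auto simp: S_def g_def)
    ultimately show ?thesis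
      using assms by (simp add: gcd_linear_fibre_le)
  qed
  have "(\<Sum>k\<in>S. real_of_int (g k)) = (\<Sum>d\<in>g ` S. \<Sum>k\<in>{k \<in> S. g k = d}. real_of_int (g k))"
    using \<open>finite S\<close> by (rule sum.image_gen)
  also have "\<dots> = (\<Sum>d\<in>g ` S. real_of_int d * real (card {k \<in> S. g k = d}))"
    by (intro sum.cong) auto
  also have "\<dots> \<le> (\<Sum>d\<in>g ` S. 3 * real_of_int (gcd A (int m)) * T)"
    by (intro sum_mono fibre)
  also have "\<dots> = real (card (g ` S)) * (3 * real_of_int (gcd A (int m)) * T)"
    by simp
  also have "\<dots> \<le> real (divisor_count m) * (3 * real_of_int (gcd A (int m)) * T)"
    using card_gcd_image_le_divisor_count[OF \<open>m > 0\<close>, of "\<lambda>k. A * k + B" S] assms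
    by (intro mult_right_mono) (simp_all add: g_def)
  finally show ?thesis
    by (simp add: S_def g_def mult_ac)
qed

theorem lemma15:
  shows "\<forall>\<epsilon>::real. \<epsilon> > 0 \<longrightarrow> (\<exists>C::real. C > 0 \<and>
    (\<forall>(m::nat) (K::real) (T::real) (A::int) (B::int).
       m \<ge> 1 \<and> K > 0 \<and> T > 0 \<and> T \<ge> K \<and> A \<noteq> 0 \<longrightarrow>
       (\<Sum>k\<in>{k::int. \<bar>real_of_int k\<bar> \<le> K \<and> real_of_int (gcd (A * k + B) (int m)) \<le> T}.
          real_of_int (gcd (A * k + B) (int m)))
       \<le> C * real m powr \<epsilon> * real_of_int (gcd A (int m)) * T))"
proof -
  obtain C where C_pos: "\<And>\<epsilon>. \<epsilon> > 0 \<Longrightarrow> C \<epsilon> > 0"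
    and C: "\<And>\<epsilon> n. \<epsilon> > 0 \<Longrightarrow> n > 0 \<Longrightarrow> real (divisor_count n) \<le> C \<epsilon> * real n powr \<epsilon>"
    using divisor_count_le_powr by metis
  have "(\<Sum>k\<in>{k::int. \<bar>real_of_int k\<bar> \<le> K \<and> real_of_int (gcd (A * k + B) (int m)) \<le> T}.
            real_of_int (gcd (A * k + B) (int m)))
         \<le> 3 * C \<epsilon> * real m powr \<epsilon> * real_of_int (gcd A (int m)) * T"
    if "\<epsilon> > 0" and "m \<ge> 1" and "K > 0" and "K \<le> T" for \<epsilon> m K T A B
  proof -
    have "m > 0" and "0 \<le> K"
      using that by simp_all
    have "3 * real (divisor_count m) * real_of_int (gcd A (int m)) * T
            \<le> 3 * C \<epsilon> * real m powr \<epsilon> * real_of_int (gcd A (int m)) * T"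
      using C[OF \<open>\<epsilon> > 0\<close> \<open>m > 0\<close>] that by (intro mult_right_mono) (auto simp: mult.assoc)
    with sum_gcd_linear_le[OF \<open>m > 0\<close> \<open>0 \<le> K\<close> \<open>K \<le> T\<close>] show ?thesis
      by (rule order_trans)
  qed
  moreover have "3 * C \<epsilon> > 0" if "\<epsilon> > 0" for \<epsilon>
    using C_pos[OF that] by simp
  ultimately show ?thesis
    by blast
qed

end
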